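(* Let $\mathcal{H}$ be a complex Hilbert space, let $A\in\mathcal{B}(\mathcal{H})$ be a nonzero positive operator, and let $\mathbb{A}=\begin{pmatrix}A&O\\O&A\end{pmatrix}$ on $\mathcal{H}\oplus\mathcal{H}$. Let $T,S\in\mathcal{B}_{A^{1/2}}(\mathcal{H})$. Then (i) $\omega_{\mathbb{A}}\left[\begin{pmatrix}T&S\\S&T\end{pmatrix}\right]=\max\{\omega_A(T+S),\omega_A(T-S)\}$; (ii) $\omega_{\mathbb{A}}\left[\begin{pmatrix}T&-S\\S&T\end{pmatrix}\right]=\max\{\omega_A(T+iS),\omega_A(T-iS)\}$.
   Context: For a positive operator $A$ on $\mathcal{H}$, $\langle x,y\rangle_A:=\langle Ax,y\rangle$ and $\|x\|_A:=\sqrt{\langle x,x\rangle_A}$. $\mathcal{B}_{A^{1/2}}(\mathcal{H})$ is the set of $T\in\mathcal{B}(\mathcal{H})$ such that $\|Tx\|_A\le\lambda\|x\|_A$ for some $\lambda>0$ and all $x\in\mathcal{H}$. For such $T$, $\omega_A(T):=\sup\{|\langle Tx,x\rangle_A|:x\in\mathcal{H},\|x\|_A=1\}$. $\omega_{\mathbb{A}}$ is defined the same way on $\mathcal{H}\oplus\mathcal{H}$ with the positive operator $\mathbb{A}$, i.e. $\langle (x_1,x_2),(y_1,y_2)\rangle_{\mathbb{A}}=\langle x_1,y_1\rangle_A+\langle x_2,y_2\rangle_A$. *)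

theory Defs
  imports "HOL-Analysis.Analysis"
begin

text \<open>The inner product is linear in the first and conjugate-linear in the second argument.\<close>

class complex_inner = real_normed_vector +
  fixes scaleC :: "complex \<Rightarrow> 'a \<Rightarrow> 'a" (infixr \<open>*\<^sub>C\<close> 75)
    and cinner :: "'a \<Rightarrow> 'a \<Rightarrow> complex"
  assumes scaleR_scaleC: "scaleR r x = scaleC (complex_of_real r) x"
    and scaleC_add_right: "scaleC a (x + y) = scaleC a x + scaleC a y"
    and scaleC_add_left: "scaleC (a + b) x = scaleC a x + scaleC b x"
    and scaleC_scaleC: "scaleC a (scaleC b x) = scaleC (a * b) x"
    and scaleC_one: "scaleC 1 x = x"
    and cinner_commute: "cinner x y = cnj (cinner y x)"
    and cinner_add_left: "cinner (x + y) z = cinner x z + cinner y z"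
    and cinner_scaleC_left: "cinner (scaleC c x) y = c * cinner x y"
    and cinner_ge_zero: "0 \<le> Re (cinner x x)"
    and cinner_eq_zero_iff: "cinner x x = 0 \<longleftrightarrow> x = 0"
    and norm_eq_sqrt_cinner: "norm x = sqrt (Re (cinner x x))"

class chilbert_space = complex_inner + complete_space

definition bounded_clinear :: "('a::complex_inner \<Rightarrow> 'b::complex_inner) \<Rightarrow> bool" where
  "bounded_clinear f \<longleftrightarrow>
     (\<forall>x y. f (x + y) = f x + f y) \<and> (\<forall>c x. f (c *\<^sub>C x) = c *\<^sub>C f x) \<and>
     (\<exists>K. \<forall>x. norm (f x) \<le> norm x * K)"

definition positive_op :: "('a::complex_inner \<Rightarrow> 'a) \<Rightarrow> bool" where
  "positive_op A \<longleftrightarrow> bounded_clinear A \<and>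
     (\<forall>x. Im (cinner (A x) x) = 0 \<and> 0 \<le> Re (cinner (A x) x))"

definition A_inner :: "('a::complex_inner \<Rightarrow> 'a) \<Rightarrow> 'a \<Rightarrow> 'a \<Rightarrow> complex" where
  "A_inner A x y = cinner (A x) y"

definition A_norm :: "('a::complex_inner \<Rightarrow> 'a) \<Rightarrow> 'a \<Rightarrow> real" where
  "A_norm A x = sqrt (Re (A_inner A x x))"

definition B_A_half :: "('a::complex_inner \<Rightarrow> 'a) \<Rightarrow> ('a \<Rightarrow> 'a) set" where
  "B_A_half A = {T. bounded_clinear T \<and> (\<exists>c>0. \<forall>x. A_norm A (T x) \<le> c * A_norm A x)}"

definition omega_A :: "('a::complex_inner \<Rightarrow> 'a) \<Rightarrow> ('a \<Rightarrow> 'a) \<Rightarrow> real" where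
  "omega_A A T = Sup {cmod (A_inner A (T x) x) | x. A_norm A x = 1}"

text \<open>The operator \<A> = diag(A,A) on H \<oplus> H (pairs), with its semi-inner product
  \<langle>(x1,x2),(y1,y2)\<rangle>_\<A> = \<langle>x1,y1\<rangle>_A + \<langle>x2,y2\<rangle>_A.\<close>
definition AA_inner :: "('a::complex_inner \<Rightarrow> 'a) \<Rightarrow> 'a \<times> 'a \<Rightarrow> 'a \<times> 'a \<Rightarrow> complex" where
  "AA_inner A p q = A_inner A (fst p) (fst q) + A_inner A (snd p) (snd q)"

definition AA_norm :: "('a::complex_inner \<Rightarrow> 'a) \<Rightarrow> 'a \<times> 'a \<Rightarrow> real" where
  "AA_norm A p = sqrt (Re (AA_inner A p p))"

definition omega_AA :: "('a::complex_inner \<Rightarrow> 'a) \<Rightarrow> ('a \<times> 'a \<Rightarrow> 'a \<times> 'a) \<Rightarrow> real" where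
  "omega_AA A M = Sup {cmod (AA_inner A (M p) p) | p. AA_norm A p = 1}"

definition block_op :: "('a::complex_inner \<Rightarrow> 'a) \<Rightarrow> ('a \<Rightarrow> 'a) \<Rightarrow> ('a \<Rightarrow> 'a) \<Rightarrow> ('a \<Rightarrow> 'a)
    \<Rightarrow> 'a \<times> 'a \<Rightarrow> 'a \<times> 'a" where
  "block_op P Q R S p = (P (fst p) + Q (snd p), R (fst p) + S (snd p))"

end

theory Submission
  imports Defs
begin

text \<open>For \<open>cmod \<omega> = 1\<close> the map \<open>unitary_mix \<omega>\<close>, \<open>(u, v) \<mapsto> (u + v, cnj \<omega> (u - v)) / sqrt 2\<close>,
  is a bijection of \<open>H \<oplus> H\<close> preserving the \<open>\<A>\<close>-form, and it turns the quadratic form of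
  \<open>[[T, \<omega>\<^sup>2 S], [S, T]]\<close> into the sum of the quadratic forms of \<open>T + \<omega> S\<close> at \<open>u\<close> and of
  \<open>T - \<omega> S\<close> at \<open>v\<close>. Hence the \<open>\<A>\<close>-numerical radius of the block operator is the larger of
  the two \<open>A\<close>-numerical radii; \<open>\<omega> = 1\<close> gives (i) and \<open>\<omega> = \<i>\<close> gives (ii).
  Since \<open>\<parallel>\<cdot>\<parallel>\<^sub>A\<close> is only a seminorm, the estimate
  \<open>\<bar>\<langle>Px, x\<rangle>\<^sub>A\<bar> \<le> omega_A A P \<cdot> \<parallel>x\<parallel>\<^sub>A\<^sup>2\<close> needs that vectors of \<open>A\<close>-seminorm zero are
  \<open>A\<close>-orthogonal to everything.\<close>

interpretation complex_vector: vector_space "scaleC :: complex \<Rightarrow> 'a \<Rightarrow> 'a::complex_inner"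
  by unfold_locales (rule scaleC_add_right scaleC_add_left scaleC_scaleC scaleC_one)+

interpretation complex_vector: vector_space_pair
  "scaleC :: complex \<Rightarrow> 'a \<Rightarrow> 'a::complex_inner" "scaleC :: complex \<Rightarrow> 'b \<Rightarrow> 'b::complex_inner"
  ..

abbreviation clinear :: "('a::complex_inner \<Rightarrow> 'b::complex_inner) \<Rightarrow> bool" where
  "clinear \<equiv> Vector_Spaces.linear (*\<^sub>C) (*\<^sub>C)"

lemma bounded_clinear_imp_clinear: "bounded_clinear f \<Longrightarrow> clinear f"
  by (simp add: bounded_clinear_def Vector_Spaces.linear_iff complex_vector.vector_space_axioms)

lemma positive_op_imp_clinear: "positive_op A \<Longrightarrow> clinear A"
  by (simp add: positive_op_def bounded_clinear_imp_clinear)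

lemma cinner_add_right: "cinner x (y + z) = cinner x y + cinner x z"
  by (metis cinner_commute cinner_add_left complex_cnj_add)

lemma cinner_scaleC_right: "cinner x (c *\<^sub>C y) = cnj c * cinner x y"
  by (metis cinner_commute cinner_scaleC_left complex_cnj_mult complex_cnj_cnj)

lemma A_inner_add_left: "clinear A \<Longrightarrow> A_inner A (x + y) z = A_inner A x z + A_inner A y z"
  by (simp add: A_inner_def complex_vector.linear_add cinner_add_left)

lemma A_inner_add_right: "A_inner A x (y + z) = A_inner A x y + A_inner A x z"
  by (simp add: A_inner_def cinner_add_right)

lemma A_inner_scaleC_left: "clinear A \<Longrightarrow> A_inner A (c *\<^sub>C x) y = c * A_inner A x y"
  by (simp add: A_inner_def complex_vector.linear_scale cinner_scaleC_left)

lemma A_inner_scaleC_right: "A_inner A x (c *\<^sub>C y) = cnj c * A_inner A x y"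
  by (simp add: A_inner_def cinner_scaleC_right)

lemma A_inner_diff_left: "clinear A \<Longrightarrow> A_inner A (x - y) z = A_inner A x z - A_inner A y z"
  using A_inner_add_left[of A x "(-1) *\<^sub>C y" z] A_inner_scaleC_left[of A "-1" y z]
  by (simp add: complex_vector.scale_minus_left)

lemma A_inner_diff_right: "A_inner A x (y - z) = A_inner A x y - A_inner A x z"
  using A_inner_add_right[of A x y "(-1) *\<^sub>C z"] A_inner_scaleC_right[of A x "-1" z]
  by (simp add: complex_vector.scale_minus_left)

lemma A_inner_zero_right [simp]: "A_inner A x 0 = 0"
  using A_inner_add_right[of A x 0 0] by simp

lemmas A_inner_sesquilinear =
  A_inner_add_left A_inner_add_right A_inner_diff_left A_inner_diff_right
  A_inner_scaleC_left A_inner_scaleC_right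

lemma Im_A_inner_self: "positive_op A \<Longrightarrow> Im (A_inner A x x) = 0"
  by (simp add: positive_op_def A_inner_def)

lemma Re_A_inner_self_ge_0: "positive_op A \<Longrightarrow> 0 \<le> Re (A_inner A x x)"
  by (simp add: positive_op_def A_inner_def)

lemma A_norm_eq_1_iff: "A_norm A x = 1 \<longleftrightarrow> Re (A_inner A x x) = 1"
  by (simp add: A_norm_def)

lemma AA_norm_eq_1_iff: "AA_norm A p = 1 \<longleftrightarrow> Re (AA_inner A p p) = 1"
  by (simp add: AA_norm_def)

lemma A_inner_commute:
  assumes pos: "positive_op A"
  shows "A_inner A x y = cnj (A_inner A y x)"
proof -
  have lin: "clinear A" using pos by (rule positive_op_imp_clinear)
  note real = Im_A_inner_self[OF pos]
  \<comment> \<open>polarization along \<open>x + y\<close> and \<open>x + \<i> y\<close>\<close>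
  have "Im (A_inner A x y) + Im (A_inner A y x) = 0"
    using real[of "x + y"] real[of x] real[of y] by (simp add: A_inner_sesquilinear lin)
  moreover have "Re (A_inner A y x) - Re (A_inner A x y) = 0"
    using real[of "x + \<i> *\<^sub>C y"] real[of x] real[of y] by (simp add: A_inner_sesquilinear lin)
  ultimately show ?thesis by (simp add: complex_eq_iff)
qed

lemma two_cmod_A_inner_le:
  assumes pos: "positive_op A"
  shows "2 * cmod (A_inner A x y) \<le> Re (A_inner A x x) + Re (A_inner A y y)"
proof (cases "A_inner A x y = 0")
  case True
  then show ?thesis using Re_A_inner_self_ge_0[OF pos] by (simp add: add_nonneg_nonneg)
next
  case False
  have lin: "clinear A" using pos by (rule positive_op_imp_clinear)
  define \<alpha> where "\<alpha> = A_inner A x y"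
  define t where "t = \<alpha> / cmod \<alpha>"
  have yx: "A_inner A y x = cnj \<alpha>"
    unfolding \<alpha>_def by (metis A_inner_commute pos)
  have "cmod \<alpha> \<noteq> 0" using False \<alpha>_def by simp
  moreover have "\<alpha> * cnj \<alpha> = cmod \<alpha> * cmod \<alpha>"
    by (metis complex_norm_square of_real_mult power2_eq_square)
  ultimately have t_\<alpha>: "cnj t * \<alpha> = cmod \<alpha>" "t * cnj \<alpha> = cmod \<alpha>" and t_unit: "t * cnj t = 1"
    unfolding t_def by (simp_all add: field_simps mult.commute)
  \<comment> \<open>expand \<open>0 \<le> \<parallel>x - t y\<parallel>\<^sub>A\<^sup>2\<close>, where \<open>t\<close> is the phase of \<open>\<alpha>\<close>\<close>
  have "A_inner A (x - t *\<^sub>C y) (x - t *\<^sub>C y)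
      = A_inner A x x - cnj t * \<alpha> - t * cnj \<alpha> + t * cnj t * A_inner A y y"
    by (simp add: A_inner_sesquilinear lin yx \<alpha>_def[symmetric] algebra_simps)
  then have "Re (A_inner A (x - t *\<^sub>C y) (x - t *\<^sub>C y))
      = Re (A_inner A x x) - 2 * cmod \<alpha> + Re (A_inner A y y)"
    by (simp add: t_\<alpha> t_unit)
  then show ?thesis
    using Re_A_inner_self_ge_0[OF pos, of "x - t *\<^sub>C y"] by (simp add: \<alpha>_def)
qed

lemma A_inner_A_null_right:
  assumes pos: "positive_op A" and null: "Re (A_inner A y y) = 0"
  shows "A_inner A x y = 0"
proof (rule ccontr)
  assume "A_inner A x y \<noteq> 0"
  then have \<alpha>: "cmod (A_inner A x y) > 0" by simp
  have lin: "clinear A" using pos by (rule positive_op_imp_clinear)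
  define t where "t = (Re (A_inner A x x) + 1) / cmod (A_inner A x y)"
  have t: "t > 0" unfolding t_def using \<alpha> Re_A_inner_self_ge_0[OF pos, of x] by simp
  have "2 * cmod (A_inner A x (of_real t *\<^sub>C y))
      \<le> Re (A_inner A x x) + Re (A_inner A (of_real t *\<^sub>C y) (of_real t *\<^sub>C y))"
    by (rule two_cmod_A_inner_le[OF pos])
  then have "2 * t * cmod (A_inner A x y) \<le> Re (A_inner A x x)"
    using t null by (simp add: A_inner_sesquilinear lin norm_mult)
  then show False using \<alpha> Re_A_inner_self_ge_0[OF pos, of x] by (simp add: t_def)
qed

lemma A_inner_A_null_left:
  "positive_op A \<Longrightarrow> Re (A_inner A x x) = 0 \<Longrightarrow> A_inner A x y = 0"
  using A_inner_A_null_right A_inner_commute by (metis complex_cnj_zero)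

lemma A_inner_normalize:
  assumes "positive_op A" and "Re (A_inner A x x) > 0"
  shows "Re (A_inner A (of_real (1 / sqrt (Re (A_inner A x x))) *\<^sub>C x)
                       (of_real (1 / sqrt (Re (A_inner A x x))) *\<^sub>C x)) = 1"
  using assms by (simp add: A_inner_sesquilinear positive_op_imp_clinear real_sqrt_mult[symmetric])

lemma ex_A_unit:
  assumes pos: "positive_op A" and nz: "A \<noteq> (\<lambda>x. 0)"
  obtains u where "A_norm A u = 1"
proof -
  obtain x where x: "A x \<noteq> 0" using nz by auto
  have "Re (A_inner A x x) \<noteq> 0"
  proof
    assume "Re (A_inner A x x) = 0"
    then have "cinner (A x) (A x) = 0"
      using A_inner_A_null_left[OF pos] by (simp add: A_inner_def)
    then show False using x cinner_eq_zero_iff by blast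
  qed
  then have "Re (A_inner A x x) > 0" using Re_A_inner_self_ge_0[OF pos, of x] by simp
  then show ?thesis using that A_inner_normalize[OF pos] A_norm_eq_1_iff by blast
qed

definition A_numrange :: "('a::complex_inner \<Rightarrow> 'a) \<Rightarrow> ('a \<Rightarrow> 'a) \<Rightarrow> complex set" where
  "A_numrange A P = {A_inner A (P x) x | x. A_norm A x = 1}"

lemma omega_A_eq_Sup_A_numrange: "omega_A A P = Sup (cmod ` A_numrange A P)"
  unfolding omega_A_def A_numrange_def by (rule arg_cong[where f = Sup]) blast

lemma cmod_A_inner_le_omega_A:
  assumes "bounded (A_numrange A P)" and "A_norm A u = 1"
  shows "cmod (A_inner A (P u) u) \<le> omega_A A P"
proof -
  have "bdd_above (cmod ` A_numrange A P)"
    using assms(1) bounded_norm_comp[of "\<lambda>z. z"] by (metis bounded_imp_bdd_above image_ident)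
  then show ?thesis
    unfolding omega_A_eq_Sup_A_numrange using assms(2)
    by (intro cSup_upper) (auto simp: A_numrange_def)
qed

lemma omega_A_le:
  assumes "positive_op A" and "A \<noteq> (\<lambda>x. 0)"
    and "\<And>u. A_norm A u = 1 \<Longrightarrow> cmod (A_inner A (P u) u) \<le> K"
  shows "omega_A A P \<le> K"
proof -
  obtain u where "A_norm A u = 1" using ex_A_unit[OF assms(1,2)] .
  then show ?thesis
    unfolding omega_A_eq_Sup_A_numrange using assms(3)
    by (intro cSup_least) (auto simp: A_numrange_def)
qed

lemma cmod_A_inner_le_omega_A_mult:
  assumes pos: "positive_op A" and P: "clinear P" "bounded (A_numrange A P)"
  shows "cmod (A_inner A (P u) u) \<le> omega_A A P * Re (A_inner A u u)"
proof (cases "Re (A_inner A u u) = 0")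
  case True
  then show ?thesis using A_inner_A_null_right[OF pos True] by simp
next
  case False
  have lin: "clinear A" using pos by (rule positive_op_imp_clinear)
  define r where "r = Re (A_inner A u u)"
  have r: "r > 0" using False Re_A_inner_self_ge_0[OF pos, of u] r_def by simp
  define w where "w = of_real (1 / sqrt r) *\<^sub>C u"
  have "A_norm A w = 1"
    using A_inner_normalize[OF pos] r by (simp add: A_norm_eq_1_iff w_def r_def)
  moreover have "A_inner A (P w) w = A_inner A (P u) u / r"
    using r unfolding w_def
    by (simp add: A_inner_sesquilinear lin complex_vector.linear_scale[OF P(1)]
        real_sqrt_mult[symmetric] flip: of_real_mult)
  ultimately have "cmod (A_inner A (P u) u) / r \<le> omega_A A P"
    using cmod_A_inner_le_omega_A[OF P(2)] r by (metis norm_divide norm_of_real abs_of_pos)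
  then show ?thesis using r by (simp add: r_def field_simps)
qed

lemma bounded_A_numrange_if_B_A_half:
  assumes pos: "positive_op A" and T: "T \<in> B_A_half A"
  shows "bounded (A_numrange A T)"
proof -
  obtain c where c: "c > 0" "\<And>x. A_norm A (T x) \<le> c * A_norm A x"
    using T B_A_half_def by blast
  have "cmod (A_inner A (T x) x) \<le> (c\<^sup>2 + 1) / 2" if x: "A_norm A x = 1" for x
  proof -
    have "sqrt (Re (A_inner A (T x) (T x))) \<le> c"
      using c(2)[of x] x by (simp add: A_norm_def)
    then have "Re (A_inner A (T x) (T x)) \<le> c\<^sup>2"
      by (rule sqrt_le_D)
    then show ?thesis
      using two_cmod_A_inner_le[OF pos, of "T x" x] x by (simp add: A_norm_eq_1_iff)
  qed
  then show ?thesis unfolding A_numrange_def by (intro boundedI) blast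
qed

lemma bounded_A_numrange_add_scaleC:
  assumes pos: "positive_op A"
    and T: "bounded (A_numrange A T)" and S: "bounded (A_numrange A S)"
  shows "bounded (A_numrange A (\<lambda>x. T x + c *\<^sub>C S x))"
proof -
  have lin: "clinear A" using pos by (rule positive_op_imp_clinear)
  obtain K L where K: "\<And>z. z \<in> A_numrange A T \<Longrightarrow> cmod z \<le> K"
    and L: "\<And>z. z \<in> A_numrange A S \<Longrightarrow> cmod z \<le> L"
    using T S unfolding bounded_iff by blast
  have "cmod (A_inner A (T x + c *\<^sub>C S x) x) \<le> K + cmod c * L" if x: "A_norm A x = 1" for x
  proof -
    have "cmod (A_inner A (T x + c *\<^sub>C S x) x)
        \<le> cmod (A_inner A (T x) x) + cmod c * cmod (A_inner A (S x) x)"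
      by (simp add: A_inner_sesquilinear lin norm_triangle_le norm_mult)
    also have "\<dots> \<le> K + cmod c * L"
      using K L x by (intro add_mono mult_left_mono) (auto simp: A_numrange_def)
    finally show ?thesis .
  qed
  then show ?thesis unfolding A_numrange_def by (intro boundedI) blast
qed

lemma omega_AA_eq_max_omega_A_if_diagonalized:
  assumes pos: "positive_op A" and nz: "A \<noteq> (\<lambda>x. 0)"
    and P: "clinear P" "bounded (A_numrange A P)"
    and Q: "clinear Q" "bounded (A_numrange A Q)"
    and "surj L"
    and isometric: "\<And>u v. AA_inner A (L (u, v)) (L (u, v)) = A_inner A u u + A_inner A v v"
    and diagonal: "\<And>u v. AA_inner A (M (L (u, v))) (L (u, v))
                           = A_inner A (P u) u + A_inner A (Q v) v"
  shows "omega_AA A M = max (omega_A A P) (omega_A A Q)"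
proof -
  define m where "m = max (omega_A A P) (omega_A A Q)"
  define W where "W = {cmod (AA_inner A (M p) p) | p. AA_norm A p = 1}"
  have omega_AA_eq: "omega_AA A M = Sup W" unfolding omega_AA_def W_def ..
  have W_le_m: "w \<le> m" if "w \<in> W" for w
  proof -
    obtain p where p: "w = cmod (AA_inner A (M p) p)" "Re (AA_inner A p p) = 1"
      using \<open>w \<in> W\<close> by (auto simp: W_def AA_norm_eq_1_iff)
    obtain u v where uv: "p = L (u, v)" using \<open>surj L\<close> by (metis surjD prod.collapse)
    have "w \<le> cmod (A_inner A (P u) u) + cmod (A_inner A (Q v) v)"
      unfolding p(1) uv diagonal by (rule norm_triangle_ineq)
    also have "\<dots> \<le> omega_A A P * Re (A_inner A u u) + omega_A A Q * Re (A_inner A v v)"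
      using cmod_A_inner_le_omega_A_mult pos P Q by (intro add_mono) auto
    also have "\<dots> \<le> m * (Re (A_inner A u u) + Re (A_inner A v v))"
      unfolding m_def distrib_left
      by (intro add_mono mult_right_mono Re_A_inner_self_ge_0[OF pos]) auto
    also have "\<dots> = m" using p(2) by (simp add: uv isometric)
    finally show ?thesis .
  qed
  have unit_L: "AA_norm A (L (u, 0)) = 1" "AA_norm A (L (0, u)) = 1" if "A_norm A u = 1" for u
    using that by (simp_all add: AA_norm_eq_1_iff A_norm_eq_1_iff isometric)
  have le_omega_AA: "cmod (AA_inner A (M p) p) \<le> omega_AA A M" if "AA_norm A p = 1" for p
  proof -
    have "cmod (AA_inner A (M p) p) \<in> W" using that unfolding W_def by blast
    then show ?thesis unfolding omega_AA_eq using W_le_m by (intro cSup_upper bdd_aboveI)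
  qed
  obtain u0 where "A_norm A u0 = 1" using ex_A_unit[OF pos nz] .
  then have "W \<noteq> {}" using unit_L(1) unfolding W_def by blast
  then have "omega_AA A M \<le> m" unfolding omega_AA_eq using W_le_m by (rule cSup_least)
  moreover have "omega_A A P \<le> omega_AA A M"
    using le_omega_AA[OF unit_L(1)] by (intro omega_A_le[OF pos nz]) (simp add: diagonal)
  moreover have "omega_A A Q \<le> omega_AA A M"
    using le_omega_AA[OF unit_L(2)] by (intro omega_A_le[OF pos nz]) (simp add: diagonal)
  ultimately show ?thesis by (simp add: m_def)
qed

definition unitary_mix :: "complex \<Rightarrow> 'a::complex_inner \<times> 'a \<Rightarrow> 'a \<times> 'a" where
  "unitary_mix \<omega> p = (of_real (1 / sqrt 2) *\<^sub>C (fst p + snd p),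
                      (of_real (1 / sqrt 2) * cnj \<omega>) *\<^sub>C (fst p - snd p))"

lemma mult_cnj_eq_1_if_cmod_eq_1: "cmod \<omega> = 1 \<Longrightarrow> \<omega> * cnj \<omega> = 1"
  by (simp add: complex_mult_cnj complex_eq_iff cmod_def power2_eq_square)

lemma surj_unitary_mix:
  assumes "cmod \<omega> = 1"
  shows "surj (unitary_mix \<omega> :: 'a::complex_inner \<times> 'a \<Rightarrow> 'a \<times> 'a)"
proof (rule surjI)
  fix p :: "'a \<times> 'a"
  define c :: complex where "c = of_real (1 / sqrt 2)"
  have "c * (c * 2) = 1" unfolding c_def by (simp flip: of_real_mult)
  moreover from this have "c * cnj \<omega> * (\<omega> * c * 2) = 1"
    using mult_cnj_eq_1_if_cmod_eq_1[OF assms] by algebra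
  ultimately show "unitary_mix \<omega> (c *\<^sub>C (fst p + \<omega> *\<^sub>C snd p), c *\<^sub>C (fst p - \<omega> *\<^sub>C snd p)) = p"
    unfolding unitary_mix_def c_def[symmetric]
    by (simp add: complex_vector.scale_right_diff_distrib complex_vector.scale_right_distrib
        prod_eq_iff mult_ac flip: scaleC_add_left)
qed

lemma AA_inner_unitary_mix:
  assumes "clinear A" "cmod \<omega> = 1"
  shows "AA_inner A (unitary_mix \<omega> (u, v)) (unitary_mix \<omega> (u, v)) = A_inner A u u + A_inner A v v"
proof -
  define c :: complex where "c = of_real (1 / sqrt 2)"
  have "c * c = 1 / 2" "cnj c = c" unfolding c_def by (simp_all flip: of_real_mult)
  then show ?thesis
    unfolding unitary_mix_def c_def[symmetric] using mult_cnj_eq_1_if_cmod_eq_1[OF assms(2)]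
    by (simp add: AA_inner_def A_inner_sesquilinear assms(1)) algebra
qed

lemma AA_inner_block_op_unitary_mix:
  assumes "clinear A" "clinear T" "clinear S" "cmod \<omega> = 1"
  shows "AA_inner A (block_op T (\<lambda>x. \<omega>\<^sup>2 *\<^sub>C S x) S T (unitary_mix \<omega> (u, v))) (unitary_mix \<omega> (u, v))
       = A_inner A (T u + \<omega> *\<^sub>C S u) u + A_inner A (T v - \<omega> *\<^sub>C S v) v"
proof -
  define c :: complex where "c = of_real (1 / sqrt 2)"
  have "c * c = 1 / 2" "cnj c = c" unfolding c_def by (simp_all flip: of_real_mult)
  then show ?thesis
    unfolding unitary_mix_def c_def[symmetric] using mult_cnj_eq_1_if_cmod_eq_1[OF assms(4)]
    by (simp add: AA_inner_def block_op_def A_inner_sesquilinear assms(1)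
        complex_vector.linear_add[OF assms(2)] complex_vector.linear_add[OF assms(3)]
        complex_vector.linear_diff[OF assms(2)] complex_vector.linear_diff[OF assms(3)]
        complex_vector.linear_scale[OF assms(2)] complex_vector.linear_scale[OF assms(3)])
      algebra
qed

lemma omega_AA_block_op_rotation:
  assumes pos: "positive_op A" and nz: "A \<noteq> (\<lambda>x. 0)"
    and T: "T \<in> B_A_half A" and S: "S \<in> B_A_half A" and \<omega>: "cmod \<omega> = 1"
  shows "omega_AA A (block_op T (\<lambda>x. \<omega>\<^sup>2 *\<^sub>C S x) S T) =
           max (omega_A A (\<lambda>x. T x + \<omega> *\<^sub>C S x)) (omega_A A (\<lambda>x. T x - \<omega> *\<^sub>C S x))"
proof (rule omega_AA_eq_max_omega_A_if_diagonalized[OF pos nz _ _ _ _ surj_unitary_mix[OF \<omega>]])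
  have lin: "clinear T" "clinear S"
    using T S by (simp_all add: B_A_half_def bounded_clinear_imp_clinear)
  show "clinear (\<lambda>x. T x + \<omega> *\<^sub>C S x)"
    using lin by (intro complex_vector.module_hom_add complex_vector.module_hom_scale)
  show "clinear (\<lambda>x. T x - \<omega> *\<^sub>C S x)"
    using lin by (intro complex_vector.module_hom_sub complex_vector.module_hom_scale)
  have bdd: "bounded (A_numrange A T)" "bounded (A_numrange A S)"
    using T S by (simp_all add: bounded_A_numrange_if_B_A_half[OF pos])
  show "bounded (A_numrange A (\<lambda>x. T x + \<omega> *\<^sub>C S x))"
    using bounded_A_numrange_add_scaleC[OF pos bdd] .
  show "bounded (A_numrange A (\<lambda>x. T x - \<omega> *\<^sub>C S x))"
    using bounded_A_numrange_add_scaleC[OF pos bdd, of "- \<omega>"]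
    by (simp add: complex_vector.scale_minus_left)
  show "AA_inner A (unitary_mix \<omega> (u, v)) (unitary_mix \<omega> (u, v)) = A_inner A u u + A_inner A v v"
    for u v
    using AA_inner_unitary_mix[OF positive_op_imp_clinear[OF pos] \<omega>] .
  show "AA_inner A (block_op T (\<lambda>x. \<omega>\<^sup>2 *\<^sub>C S x) S T (unitary_mix \<omega> (u, v))) (unitary_mix \<omega> (u, v))
      = A_inner A (T u + \<omega> *\<^sub>C S u) u + A_inner A (T v - \<omega> *\<^sub>C S v) v" for u v
    using AA_inner_block_op_unitary_mix[OF positive_op_imp_clinear[OF pos] lin \<omega>] .
qed

theorem lemma2p5:
  fixes A T S :: "'a::chilbert_space \<Rightarrow> 'a"
  assumes "positive_op A" and "A \<noteq> (\<lambda>x. 0)"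
    and "T \<in> B_A_half A" and "S \<in> B_A_half A"
  shows "omega_AA A (block_op T S S T) =
           max (omega_A A (\<lambda>x. T x + S x)) (omega_A A (\<lambda>x. T x - S x)) \<and>
         omega_AA A (block_op T (\<lambda>x. - S x) S T) =
           max (omega_A A (\<lambda>x. T x + \<i> *\<^sub>C S x)) (omega_A A (\<lambda>x. T x - \<i> *\<^sub>C S x))"
  using omega_AA_block_op_rotation[OF assms, of 1] omega_AA_block_op_rotation[OF assms, of \<i>]
  by (simp add: complex_vector.scale_minus_left)

end
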